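(* For all integers $n\geq 1$ and $1\le i\le\lfloor n/2\rfloor$, we have $(i+1)\gamma_i(B_{n-1})\le\gamma_i(B_n)$.
   Context: $B_n$ denotes the group of signed permutations: bijections $\sigma$ of $\{\pm1,\dots,\pm n\}$ with $\sigma(-i)=-\sigma(i)$, written $\sigma=\sigma_1\cdots\sigma_n$ with $\sigma_i=\sigma(i)$. With $\sigma_0=0$, $\mathrm{des}_B(\sigma)=|\{i\in\{0,\dots,n-1\}:\sigma_i>\sigma_{i+1}\}|$. The type $B$ Eulerian polynomial $B_n(t)=\sum_{\sigma\in B_n}t^{\mathrm{des}_B(\sigma)}$ satisfies $B_n(t)=t^nB_n(1/t)$, so $B_n(t)=\sum_{i=0}^{\lfloor n/2\rfloor}\gamma_i(B_n)t^i(1+t)^{n-2i}$ for unique integers $\gamma_i(B_n)$; set $\gamma_i(B_n)=0$ for $i>\lfloor n/2\rfloor$. *)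

theory Defs
  imports "HOL-Computational_Algebra.Polynomial" "HOL-Combinatorics.Permutations"
begin

text \<open>Signed permutations of [n]: bijections sigma of {-n..n}-{0} (extended by the identity
  elsewhere, so sigma 0 = 0) with sigma(-i) = -sigma(i).\<close>
definition signed_perms :: "nat \<Rightarrow> (int \<Rightarrow> int) set" where
  "signed_perms n = {\<sigma>. \<sigma> permutes ({- int n..int n} - {0}) \<and> (\<forall>i. \<sigma> (- i) = - \<sigma> i)}"

text \<open>Type B descent number, with sigma_0 = 0.\<close>
definition desB :: "nat \<Rightarrow> (int \<Rightarrow> int) \<Rightarrow> nat" where
  "desB n \<sigma> = card {i \<in> {0..<n}. \<sigma> (int i) > \<sigma> (int i + 1)}"

definition eulerB :: "nat \<Rightarrow> int poly" where
  "eulerB n = (\<Sum>\<sigma>\<in>signed_perms n. monom 1 (desB n \<sigma>))"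

definition is_gamma_vector :: "nat \<Rightarrow> int poly \<Rightarrow> (nat \<Rightarrow> int) \<Rightarrow> bool" where
  "is_gamma_vector n p g \<longleftrightarrow> (\<forall>i > n div 2. g i = 0) \<and>
     p = (\<Sum>i\<le>n div 2. smult (g i) (monom 1 i * [:1, 1:] ^ (n - 2 * i)))"

definition gammaB :: "nat \<Rightarrow> nat \<Rightarrow> int" where
  "gammaB n i = (THE g. is_gamma_vector n (eulerB n) g) i"

end

theory Submission
  imports Defs
begin

text \<open>Inserting the letter +(m+1) or -(m+1) into each of the m+1 gaps after the letters of
  0, sigma(1), ..., sigma(m) turns signed permutations of [m] into those of [m+1] and gives the
  recurrence B_(m+1)(t) = (1 + (2m+1)t) B_m(t) + 2t(1-t) B_m'(t). The operator on the right sends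
  t^i (1+t)^(m-2i) to (2i+1) t^i (1+t)^(m+1-2i) + 4(m-2i) t^(i+1) (1+t)^(m-1-2i), so
  gamma_i(B_(m+1)) = (2i+1) gamma_i(B_m) + 4(m+2-2i) gamma_(i-1)(B_m). By induction all gamma
  numbers are nonnegative, and the second summand is nonnegative because gamma_(i-1)(B_m)
  vanishes whenever its weight m+2-2i is negative. Hence
  gamma_i(B_(m+1)) >= (2i+1) gamma_i(B_m) >= (i+1) gamma_i(B_m).\<close>

section \<open>The Eulerian recurrence operator\<close>

definition X :: "'a::comm_ring_1 poly" where
  "X = [:0, 1:]"

lemma pderiv_X [simp]: "pderiv X = 1"
  by (simp add: X_def pderiv_pCons)

lemma monom_one_eq_X_power: "monom 1 n = X ^ n"
  by (simp add: monom_altdef X_def)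

lemma pCons_one_one_eq_one_plus_X: "[:1, 1:] = 1 + X"
  by (simp add: X_def one_pCons)

definition eulerB_step :: "nat \<Rightarrow> 'a::idom poly \<Rightarrow> 'a poly" where
  "eulerB_step m p = (1 + of_nat (2 * m + 1) * X) * p + 2 * X * (1 - X) * pderiv p"

lemma eulerB_step_sum: "eulerB_step m (sum f A) = (\<Sum>a\<in>A. eulerB_step m (f a))"
  using higher_pderiv_sum[of 1 f A]
  by (simp add: eulerB_step_def sum_distrib_left sum.distrib)

lemma eulerB_step_smult: "eulerB_step m (smult c p) = smult c (eulerB_step m p)"
  by (simp add: eulerB_step_def pderiv_smult smult_add_right)

lemma eulerB_step_altdef:
  "eulerB_step m p = (1 + of_nat (2 * m + 1) * X) * p + 2 * (1 - X) * (X * pderiv p)"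
  by (simp add: eulerB_step_def mult_ac)

lemma X_times_pderiv_X_power: "X * pderiv (X ^ d) = of_nat d * X ^ d"
proof (cases d)
  case (Suc e)
  have "X * pderiv (X ^ Suc e) = smult (of_nat (Suc e)) (X * X ^ e)"
    by (simp only: pderiv_power_Suc pderiv_X mult_1_right mult_smult_right)
  then show ?thesis
    by (simp add: Suc of_nat_poly)
qed simp

lemma eulerB_step_X_power:
  assumes "d \<le> m"
  shows "eulerB_step m (X ^ d) = of_nat (2 * d + 1) * X ^ d + of_nat (2 * (m - d) + 1) * X ^ Suc d"
proof -
  obtain k where "m = d + k" using assms le_Suc_ex by blast
  then show ?thesis
    by (simp add: eulerB_step_altdef X_times_pderiv_X_power) (simp add: algebra_simps)
qed

lemma eulerB_step_gamma_basis:
  assumes "2 * i \<le> m"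
  shows "eulerB_step m (X ^ i * (1 + X) ^ (m - 2 * i)) =
    smult (of_nat (2 * i + 1)) (X ^ i * (1 + X) ^ (Suc m - 2 * i)) +
    smult (of_nat (4 * (m - 2 * i))) (X ^ Suc i * (1 + X) ^ (Suc m - 2 * Suc i))"
proof -
  obtain k where "m = k + 2 * i"
    using assms le_Suc_ex by (metis add.commute)
  then have k: "m - 2 * i = k" "Suc m - 2 * i = Suc k" "Suc m - 2 * Suc i = k - 1"
    by auto
  have "eulerB_step m (X ^ i * (1 + X) ^ k) =
      of_nat (2 * i + 1) * (X ^ i * (1 + X) ^ Suc k) + of_nat (4 * k) * (X ^ Suc i * (1 + X) ^ (k - 1))"
  proof (cases k)
    case 0
    then show ?thesis
      by (simp add: \<open>m = k + 2 * i\<close> eulerB_step_altdef X_times_pderiv_X_power) (simp add: algebra_simps)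
  next
    case (Suc l)
    have pderiv_power: "pderiv ((1 + X) ^ Suc l) = of_nat (Suc l) * (1 + X) ^ l"
      by (simp add: pderiv_power_Suc pderiv_add of_nat_poly del: power_Suc of_nat_Suc)
    have "X * pderiv (X ^ i * (1 + X) ^ Suc l) =
        X ^ i * (X * (of_nat (Suc l) * (1 + X) ^ l)) + (1 + X) ^ Suc l * (X * pderiv (X ^ i))"
      unfolding pderiv_mult pderiv_power by (simp only: distrib_left mult_ac)
    also have "\<dots> = (of_nat i * (1 + X) + of_nat (Suc l) * X) * (X ^ i * (1 + X) ^ l)"
      by (simp add: X_times_pderiv_X_power algebra_simps)
    finally have X_times_pderiv: "X * pderiv (X ^ i * (1 + X) ^ Suc l) =
        (of_nat i * (1 + X) + of_nat (Suc l) * X) * (X ^ i * (1 + X) ^ l)" .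
    show ?thesis
      unfolding \<open>m = k + 2 * i\<close> Suc eulerB_step_altdef X_times_pderiv by (simp add: algebra_simps)
  qed
  then show ?thesis
    unfolding k by (simp only: of_nat_mult_conv_smult)
qed

section \<open>The gamma recursion\<close>

fun gammaB_rec :: "nat \<Rightarrow> nat \<Rightarrow> int" where
  "gammaB_rec 0 i = (if i = 0 then 1 else 0)"
| "gammaB_rec (Suc m) i = int (2 * i + 1) * gammaB_rec m i +
     (if i = 0 then 0 else 4 * ((int m + 2 - 2 * int i) * gammaB_rec m (i - 1)))"

lemma gammaB_rec_eq_0: "n div 2 < i \<Longrightarrow> gammaB_rec n i = 0"
proof (induction n arbitrary: i)
  case (Suc m)
  have "(int m + 2 - 2 * int i) * gammaB_rec m (i - 1) = 0"
  proof (cases "m div 2 < i - 1")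
    case False
    with Suc.prems have "int m + 2 - 2 * int i = 0" by linarith
    then show ?thesis by simp
  qed (simp add: Suc.IH)
  moreover have "gammaB_rec m i = 0"
    using Suc by simp
  ultimately show ?case
    by simp
qed simp

lemma gammaB_rec_weight_nonneg_or_eq_0:
  "0 \<le> int m + 2 - 2 * int i \<or> gammaB_rec m (i - 1) = 0"
  using gammaB_rec_eq_0[of m "i - 1"] by linarith

lemma gammaB_rec_nonneg: "0 \<le> gammaB_rec n i"
proof (induction n arbitrary: i)
  case (Suc m)
  then have "0 \<le> (int m + 2 - 2 * int i) * gammaB_rec m (i - 1)"
    using gammaB_rec_weight_nonneg_or_eq_0[of m i] by auto
  with Suc.IH[of i] show ?case
    by simp
qed simp

lemma gammaB_rec_Suc_ge: "int (2 * i + 1) * gammaB_rec m i \<le> gammaB_rec (Suc m) i"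
proof -
  have "0 \<le> (int m + 2 - 2 * int i) * gammaB_rec m (i - 1)"
    using gammaB_rec_weight_nonneg_or_eq_0[of m i] gammaB_rec_nonneg[of m "i - 1"] by auto
  then show ?thesis
    by simp
qed

definition gamma_poly :: "nat \<Rightarrow> int poly" where
  "gamma_poly n = (\<Sum>i\<le>n. smult (gammaB_rec n i) (X ^ i * (1 + X) ^ (n - 2 * i)))"

lemma eulerB_step_gamma_term:
  "smult (gammaB_rec m i) (eulerB_step m (X ^ i * (1 + X) ^ (m - 2 * i))) =
     smult (int (2 * i + 1) * gammaB_rec m i) (X ^ i * (1 + X) ^ (Suc m - 2 * i)) +
     smult (4 * ((int m - 2 * int i) * gammaB_rec m i)) (X ^ Suc i * (1 + X) ^ (Suc m - 2 * Suc i))"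
proof (cases "2 * i \<le> m")
  case True
  then have "int (m - 2 * i) = int m - 2 * int i"
    by simp
  then show ?thesis
    unfolding eulerB_step_gamma_basis[OF True] smult_add_right smult_smult by (simp add: mult_ac)
next
  case False
  then show ?thesis
    by (simp add: gammaB_rec_eq_0)
qed

lemma gamma_poly_Suc: "gamma_poly (Suc m) = eulerB_step m (gamma_poly m)"
proof -
  let ?b = "\<lambda>i. X ^ i * (1 + X) ^ (Suc m - 2 * i)"
  have "eulerB_step m (gamma_poly m) = (\<Sum>i\<le>m. smult (int (2 * i + 1) * gammaB_rec m i) (?b i)) +
           (\<Sum>i\<le>m. smult (4 * ((int m - 2 * int i) * gammaB_rec m i)) (?b (Suc i)))"
    unfolding gamma_poly_def eulerB_step_sum eulerB_step_smult eulerB_step_gamma_term sum.distrib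
    by simp
  also have "(\<Sum>i\<le>m. smult (int (2 * i + 1) * gammaB_rec m i) (?b i)) =
      (\<Sum>i\<le>Suc m. smult (int (2 * i + 1) * gammaB_rec m i) (?b i))"
    using gammaB_rec_eq_0[of m "Suc m"] by simp
  also have "(\<Sum>i\<le>m. smult (4 * ((int m - 2 * int i) * gammaB_rec m i)) (?b (Suc i))) =
      (\<Sum>i\<le>Suc m. smult (if i = 0 then 0 else 4 * ((int m + 2 - 2 * int i) * gammaB_rec m (i - 1))) (?b i))"
    by (subst sum.atMost_Suc_shift) (simp add: algebra_simps)
  also have "(\<Sum>i\<le>Suc m. smult (int (2 * i + 1) * gammaB_rec m i) (?b i)) + \<dots> = gamma_poly (Suc m)"
    unfolding gamma_poly_def by (simp add: smult_add_left sum.distrib)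
  finally show ?thesis
    by simp
qed

lemma is_gamma_vector_unique:
  assumes "is_gamma_vector n p g" and "is_gamma_vector n p h"
  shows "g = h"
proof
  define b :: "nat \<Rightarrow> int poly" where "b j = monom 1 j * [:1, 1:] ^ (n - 2 * j)" for j
  define d where "d j = g j - h j" for j
  have sum_eq_0: "(\<Sum>j\<le>n div 2. smult (d j) (b j)) = 0"
    using assms unfolding is_gamma_vector_def d_def b_def
    by (simp add: smult_diff_left sum_subtractf)
  have "d i = 0" for i
  proof (induction i rule: less_induct)
    case (less i)
    show ?case
    proof (cases "n div 2 < i")
      case True
      then show ?thesis
        using assms unfolding is_gamma_vector_def d_def by simp
    next
      case False
      \<comment> \<open>the coefficient of \<open>t\<^sup>i\<close> sees only \<open>d i\<close>: \<open>b j\<close> has lowest term \<open>t\<^sup>j\<close>,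
        and \<open>d j = 0\<close> for \<open>j < i\<close>\<close>
      have "0 = (\<Sum>j\<le>n div 2. d j * coeff (b j) i)"
        using arg_cong[OF sum_eq_0, of "\<lambda>p. coeff p i"] by (simp add: coeff_sum)
      also have "\<dots> = (\<Sum>j\<le>n div 2. if j = i then d i else 0)"
        using less.IH by (intro sum.cong) (auto simp: b_def coeff_monom_mult coeff_0_power)
      also have "\<dots> = d i"
        using False by simp
      finally show ?thesis
        by simp
    qed
  qed
  then show "g i = h i" for i
    by (simp add: d_def)
qed

lemma gammaB_eqI: "is_gamma_vector n (eulerB n) g \<Longrightarrow> gammaB n = g"
  unfolding gammaB_def using is_gamma_vector_unique by blast

lemma is_gamma_vector_gamma_poly: "is_gamma_vector n (gamma_poly n) (gammaB_rec n)"
  unfolding is_gamma_vector_def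
proof
  show "\<forall>i>n div 2. gammaB_rec n i = 0"
    using gammaB_rec_eq_0 by blast
  have "gamma_poly n = (\<Sum>i\<le>n div 2. smult (gammaB_rec n i) (X ^ i * (1 + X) ^ (n - 2 * i)))"
    unfolding gamma_poly_def by (rule sum.mono_neutral_right) (auto simp: gammaB_rec_eq_0)
  then show "gamma_poly n = (\<Sum>i\<le>n div 2. smult (gammaB_rec n i) (monom 1 i * [:1, 1:] ^ (n - 2 * i)))"
    by (simp add: monom_one_eq_X_power pCons_one_one_eq_one_plus_X)
qed

section \<open>Descents and insertions\<close>

fun descents :: "'a::linorder list \<Rightarrow> nat" where
  "descents (a # b # xs) = (if b < a then 1 else 0) + descents (b # xs)"
| "descents _ = 0"

lemma descents_less_length: "xs \<noteq> [] \<Longrightarrow> descents xs < length xs"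
  by (induction xs rule: descents.induct) auto

lemma descents_eq_card: "descents xs = card {i. Suc i < length xs \<and> xs ! Suc i < xs ! i}"
proof (induction xs rule: descents.induct)
  case (1 a b xs)
  define D where "D = {i. Suc i < length (b # xs) \<and> (b # xs) ! Suc i < (b # xs) ! i}"
  have "finite D"
    by (rule finite_subset[of D "{..<length (b # xs)}"]) (auto simp: D_def)
  moreover have "{i. Suc i < length (a # b # xs) \<and> (a # b # xs) ! Suc i < (a # b # xs) ! i} =
      (if b < a then insert 0 (Suc ` D) else Suc ` D)"
  proof (rule set_eqI)
    fix i
    show "i \<in> {i. Suc i < length (a # b # xs) \<and> (a # b # xs) ! Suc i < (a # b # xs) ! i} \<longleftrightarrow>
        i \<in> (if b < a then insert 0 (Suc ` D) else Suc ` D)"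
      by (cases i) (auto simp: D_def)
  qed
  ultimately show ?case
    using "1.IH" by (simp add: D_def card_image)
qed auto

definition insert_at :: "nat \<Rightarrow> 'a \<Rightarrow> 'a list \<Rightarrow> 'a list" where
  "insert_at j y xs = take j xs @ y # drop j xs"

lemma insert_at_0 [simp]: "insert_at 0 y xs = y # xs"
  by (simp add: insert_at_def)

lemma insert_at_Suc_Cons [simp]: "insert_at (Suc j) y (a # xs) = a # insert_at j y xs"
  by (simp add: insert_at_def)

lemma length_insert_at [simp]: "length (insert_at j y xs) = Suc (length xs)"
  by (simp add: insert_at_def)

lemma set_insert_at [simp]: "set (insert_at j y xs) = insert y (set xs)"
  using set_append[of "take j xs" "drop j xs"] by (simp add: insert_at_def)

lemma map_insert_at: "map f (insert_at j y xs) = insert_at j (f y) (map f xs)"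
  by (simp add: insert_at_def take_map drop_map)

lemma distinct_insert_at [simp]: "distinct (insert_at j y xs) \<longleftrightarrow> y \<notin> set xs \<and> distinct xs"
proof -
  have "distinct xs \<longleftrightarrow> distinct (take j xs) \<and> distinct (drop j xs) \<and> set (take j xs) \<inter> set (drop j xs) = {}"
    and "set xs = set (take j xs) \<union> set (drop j xs)"
    by (simp_all only: distinct_append[symmetric] set_append[symmetric] append_take_drop_id)
  then show ?thesis
    unfolding insert_at_def distinct_append distinct.simps(2) set_simps by blast
qed

lemma insert_at_take_nth_drop:
  "j < length xs \<Longrightarrow> insert_at j (xs ! j) (take j xs @ drop (Suc j) xs) = xs"
  by (simp add: insert_at_def id_take_nth_drop[symmetric])

lemma insert_at_eq_insert_atD:
  assumes eq: "insert_at j y xs = insert_at j' y' xs'"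
    and "j \<le> length xs" "j' \<le> length xs'"
    and "P y" "P y'" "\<forall>x\<in>set xs. \<not> P x" "\<forall>x\<in>set xs'. \<not> P x"
  shows "j = j' \<and> y = y' \<and> xs = xs'"
proof -
  \<comment> \<open>the inserted letter is the only one satisfying \<open>P\<close>, so the prefix before it is determined\<close>
  have prefix: "takeWhile (\<lambda>x. \<not> P x) (insert_at j y xs) = take j xs"
    if "P y" "\<forall>x\<in>set xs. \<not> P x" for j y xs
  proof -
    have "\<forall>x\<in>set (take j xs). \<not> P x"
      using that(2) by (meson in_set_takeD)
    with that(1) show ?thesis
      by (simp add: insert_at_def takeWhile_append2)
  qed
  have "take j xs = take j' xs'"
    using prefix[of y xs j] prefix[of y' xs' j'] assms by simp
  moreover from this have "j = j'"
    using assms(2,3) by (metis length_take min.absorb2)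
  moreover from calculation have "y # drop j xs = y' # drop j xs'"
    using eq by (simp add: insert_at_def)
  ultimately show ?thesis
    by (metis append_take_drop_id list.inject)
qed

text \<open>Inserting the maximum into a descent slot or at the end, or the minimum into an ascent
  slot, keeps the number of descents; every other insertion adds one.\<close>
lemma sum_descents_insert_extremes:
  fixes lo hi :: "'a::linorder"
  assumes "xs \<noteq> []" and "\<forall>a\<in>set xs. lo < a \<and> a < hi"
  shows "(\<Sum>j<length xs. X ^ descents (insert_at (Suc j) hi xs) + X ^ descents (insert_at (Suc j) lo xs)) =
    of_nat (2 * descents xs + 1) * X ^ descents xs +
    of_nat (2 * (length xs - 1 - descents xs) + 1) * (X ^ Suc (descents xs) :: 'b::comm_ring_1 poly)"
  using assms
proof (induction xs rule: descents.induct)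
  case (1 a b xs)
  let ?S = "\<lambda>zs. (\<Sum>j<length zs. X ^ descents (insert_at (Suc j) hi zs) +
    X ^ descents (insert_at (Suc j) lo zs)) :: 'b poly"
  let ?d = "descents (b # xs)"
  define c :: nat where "c = (if b < a then 1 else 0)"
  have "lo < a" "a < hi" "lo < b" "b < hi"
    using "1.prems" by simp_all
  then have first: "descents (insert_at (Suc 0) hi (a # b # xs)) = Suc ?d"
    "descents (insert_at (Suc 0) lo (a # b # xs)) = Suc ?d"
    using less_not_sym by fastforce+
  have shifted: "descents (insert_at (Suc (Suc j)) y (a # b # xs)) = c + descents (insert_at (Suc j) y (b # xs))"
    for j y
    by (simp add: c_def)
  have descents_Cons: "descents (a # b # xs) = c + ?d"
    by (simp add: c_def)
  have "?d < length (b # xs)"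
    by (rule descents_less_length) simp
  then obtain k where k: "length xs = ?d + k"
    using le_Suc_ex by fastforce
  have IH: "?S (b # xs) = of_nat (2 * ?d + 1) * X ^ ?d + of_nat (2 * (length (b # xs) - 1 - ?d) + 1) * X ^ Suc ?d"
    using "1.IH" "1.prems" by simp
  have "?S (a # b # xs) = 2 * X ^ Suc ?d + X ^ c * ?S (b # xs)"
    unfolding length_Cons[of a] sum.lessThan_Suc_shift first shifted
    by (simp add: power_add sum_distrib_left algebra_simps)
  also have "\<dots> = of_nat (2 * descents (a # b # xs) + 1) * X ^ descents (a # b # xs) +
      of_nat (2 * (length (a # b # xs) - 1 - descents (a # b # xs)) + 1) * X ^ Suc (descents (a # b # xs))"
    unfolding IH descents_Cons by (simp add: k c_def algebra_simps)
  finally show ?case .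
next
  case ("2_2" a)
  then have "\<not> hi < a" "lo < a"
    using less_not_sym by fastforce+
  then show ?case
    by simp
qed simp

section \<open>Signed permutations as signed words\<close>

definition signed_words :: "nat \<Rightarrow> int list set" where
  "signed_words n =
    {w. length w = n \<and> distinct (map abs w) \<and> (\<forall>z\<in>set w. 1 \<le> \<bar>z\<bar> \<and> \<bar>z\<bar> \<le> int n)}"

lemma signed_words_0: "signed_words 0 = {[]}"
  by (auto simp: signed_words_def)

definition insert_letter :: "nat \<Rightarrow> int list \<times> nat \<times> bool \<Rightarrow> int list" where
  "insert_letter m = (\<lambda>(w, j, b). insert_at j (if b then int (Suc m) else - int (Suc m)) w)"

lemma insert_at_in_signed_words:
  assumes "w \<in> signed_words m" and "\<bar>y\<bar> = int (Suc m)"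
  shows "insert_at j y w \<in> signed_words (Suc m)"
proof -
  have "\<bar>y\<bar> \<notin> abs ` set w"
    using assms by (auto simp: signed_words_def)
  with assms show ?thesis
    by (auto simp: signed_words_def map_insert_at)
qed

lemma signed_words_SucE:
  assumes w: "w \<in> signed_words (Suc m)"
  obtains v j y where "v \<in> signed_words m" "j \<le> m" "\<bar>y\<bar> = int (Suc m)" "w = insert_at j y v"
proof -
  have "abs ` set w \<subseteq> {1..int (Suc m)}" and "card (abs ` set w) = card {1..int (Suc m)}"
    using w distinct_card[of "map abs w"] by (auto simp: signed_words_def)
  then have "abs ` set w = {1..int (Suc m)}"
    by (metis card_subset_eq finite_atLeastAtMost_int)
  then have "int (Suc m) \<in> abs ` set w"
    by simp
  then obtain j where j: "j < Suc m" "\<bar>w ! j\<bar> = int (Suc m)"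
    using w by (auto simp: in_set_conv_nth signed_words_def simp del: of_nat_Suc)
  define v where "v = take j w @ drop (Suc j) w"
  define y where "y = w ! j"
  have w_eq: "w = insert_at j y v"
    using j w by (simp add: v_def y_def insert_at_take_nth_drop signed_words_def)
  have y: "\<bar>y\<bar> = int (Suc m)"
    using j by (simp add: y_def)
  have "v \<in> signed_words m"
    using w y unfolding w_eq by (force simp: signed_words_def map_insert_at)
  moreover have "j \<le> m"
    using j(1) by simp
  ultimately show ?thesis
    using that y w_eq by blast
qed

lemma inj_on_insert_letter: "inj_on (insert_letter m) (signed_words m \<times> {..m} \<times> UNIV)"
proof -
  have injective: "(w, j, b) = (w', j', b')"
    if w: "w \<in> signed_words m" "w' \<in> signed_words m" and j: "j \<le> m" "j' \<le> m"
      and eq: "insert_letter m (w, j, b) = insert_letter m (w', j', b')" for w j b w' j' b'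
  proof -
    define y :: "bool \<Rightarrow> int" where "y c = (if c then int (Suc m) else - int (Suc m))" for c
    have "j = j' \<and> y b = y b' \<and> w = w'"
    proof (rule insert_at_eq_insert_atD[where P = "\<lambda>z. \<bar>z\<bar> = int (Suc m)"])
      show "insert_at j (y b) w = insert_at j' (y b') w'"
        using eq by (simp add: insert_letter_def y_def)
    qed (use w j in \<open>auto simp: signed_words_def y_def\<close>)
    then show ?thesis
      by (auto simp: y_def split: if_splits)
  qed
  show ?thesis
    unfolding inj_on_def by clarify (metis injective prod.inject)
qed

lemma bij_betw_insert_letter:
  "bij_betw (insert_letter m) (signed_words m \<times> {..m} \<times> UNIV) (signed_words (Suc m))"
  unfolding bij_betw_def
proof
  show "inj_on (insert_letter m) (signed_words m \<times> {..m} \<times> UNIV)"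
    by (rule inj_on_insert_letter)
  show "insert_letter m ` (signed_words m \<times> {..m} \<times> UNIV) = signed_words (Suc m)"
  proof
    show "insert_letter m ` (signed_words m \<times> {..m} \<times> UNIV) \<subseteq> signed_words (Suc m)"
      by (auto simp: insert_letter_def intro: insert_at_in_signed_words)
    show "signed_words (Suc m) \<subseteq> insert_letter m ` (signed_words m \<times> {..m} \<times> UNIV)"
    proof
      fix w
      assume "w \<in> signed_words (Suc m)"
      then obtain v j y where "v \<in> signed_words m" "j \<le> m" "\<bar>y\<bar> = int (Suc m)" "w = insert_at j y v"
        by (rule signed_words_SucE)
      moreover have "(if 0 < y then int (Suc m) else - int (Suc m)) = y"
        using \<open>\<bar>y\<bar> = int (Suc m)\<close> by (cases "0 < y") auto
      ultimately have "w = insert_letter m (v, j, 0 < y)"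
        by (simp add: insert_letter_def)
      with \<open>v \<in> signed_words m\<close> \<open>j \<le> m\<close>
      show "w \<in> insert_letter m ` (signed_words m \<times> {..m} \<times> UNIV)"
        by auto
    qed
  qed
qed

lemma sum_signed_words_Suc:
  "(\<Sum>w\<in>signed_words (Suc m). X ^ descents (0 # w)) =
    eulerB_step m (\<Sum>w\<in>signed_words m. X ^ descents (0 # w) :: 'a::idom poly)"
proof -
  let ?N = "int (Suc m)"
  have "(\<Sum>w\<in>signed_words (Suc m). X ^ descents (0 # w)) =
      (\<Sum>p\<in>signed_words m \<times> {..m} \<times> UNIV. X ^ descents (0 # insert_letter m p) :: 'a poly)"
    by (rule sum.reindex_bij_betw[OF bij_betw_insert_letter, symmetric])
  also have "\<dots> = (\<Sum>w\<in>signed_words m. \<Sum>j<length (0 # w).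
      X ^ descents (insert_at (Suc j) ?N (0 # w)) + X ^ descents (insert_at (Suc j) (- ?N) (0 # w)))"
    unfolding sum.cartesian_product' UNIV_bool
    by (intro sum.cong refl) (auto simp: signed_words_def insert_letter_def lessThan_Suc_atMost add.commute)
  also have "\<dots> = (\<Sum>w\<in>signed_words m. eulerB_step m (X ^ descents (0 # w)))"
  proof (rule sum.cong[OF refl])
    fix w
    assume w: "w \<in> signed_words m"
    then have "\<forall>a\<in>set (0 # w). - ?N < a \<and> a < ?N"
      by (force simp: signed_words_def)
    then have "(\<Sum>j<length (0 # w). X ^ descents (insert_at (Suc j) ?N (0 # w)) +
        X ^ descents (insert_at (Suc j) (- ?N) (0 # w))) =
      of_nat (2 * descents (0 # w) + 1) * X ^ descents (0 # w) +
      of_nat (2 * (length (0 # w) - 1 - descents (0 # w)) + 1) * (X ^ Suc (descents (0 # w)) :: 'a poly)"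
      by (intro sum_descents_insert_extremes) simp_all
    also have "\<dots> = eulerB_step m (X ^ descents (0 # w))"
      using w descents_less_length[of "0 # w"] by (simp add: eulerB_step_X_power signed_words_def)
    finally show "(\<Sum>j<length (0 # w). X ^ descents (insert_at (Suc j) ?N (0 # w)) +
        X ^ descents (insert_at (Suc j) (- ?N) (0 # w))) = eulerB_step m (X ^ descents (0 # w) :: 'a poly)" .
  qed
  also have "\<dots> = eulerB_step m (\<Sum>w\<in>signed_words m. X ^ descents (0 # w))"
    by (simp add: eulerB_step_sum)
  finally show ?thesis .
qed

abbreviation signed_range :: "nat \<Rightarrow> int set" where
  "signed_range n \<equiv> {- int n..int n} - {0}"

lemma signed_permsD:
  assumes "\<sigma> \<in> signed_perms n"
  shows "\<sigma> permutes signed_range n" "\<sigma> (- i) = - \<sigma> i" "\<sigma> 0 = 0"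
proof -
  show "\<sigma> permutes signed_range n" "\<sigma> (- i) = - \<sigma> i" for i
    using assms by (simp_all add: signed_perms_def)
  from this(2)[of 0] show "\<sigma> 0 = 0"
    by simp
qed

definition signed_perm_word :: "nat \<Rightarrow> (int \<Rightarrow> int) \<Rightarrow> int list" where
  "signed_perm_word n \<sigma> = map (\<lambda>k. \<sigma> (int k)) [1..<Suc n]"

lemma length_signed_perm_word [simp]: "length (signed_perm_word n \<sigma>) = n"
  by (simp add: signed_perm_word_def)

lemma nth_signed_perm_word: "i < n \<Longrightarrow> signed_perm_word n \<sigma> ! i = \<sigma> (int (Suc i))"
  by (simp add: signed_perm_word_def del: upt_Suc)

lemma desB_eq_descents:
  assumes "\<sigma> \<in> signed_perms n"
  shows "desB n \<sigma> = descents (0 # signed_perm_word n \<sigma>)"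
proof -
  let ?v = "0 # signed_perm_word n \<sigma>"
  have "?v ! i = \<sigma> (int i)" if "i \<le> n" for i
    using that signed_permsD(3)[OF assms] by (cases i) (auto simp: nth_signed_perm_word)
  moreover have "?v ! Suc i = \<sigma> (int i + 1)" if "i < n" for i
    using that by (simp add: nth_signed_perm_word add.commute)
  ultimately have "{i \<in> {0..<n}. \<sigma> (int i + 1) < \<sigma> (int i)} = {i. Suc i < length ?v \<and> ?v ! Suc i < ?v ! i}"
    by auto
  then show ?thesis
    by (simp add: desB_def descents_eq_card)
qed

lemma signed_perm_word_in_signed_words:
  assumes "\<sigma> \<in> signed_perms n"
  shows "signed_perm_word n \<sigma> \<in> signed_words n"
proof -
  note perm = signed_permsD(1)[OF assms] and odd = signed_permsD(2)[OF assms]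
  have "\<sigma> (int k) \<in> signed_range n" if "k \<in> {1..<Suc n}" for k
    using that permutes_in_image[OF perm] by auto
  then have range: "\<forall>z\<in>set (signed_perm_word n \<sigma>). 1 \<le> \<bar>z\<bar> \<and> \<bar>z\<bar> \<le> int n"
    by (force simp: signed_perm_word_def del: upt_Suc)
  have "inj_on (\<lambda>k. \<bar>\<sigma> (int k)\<bar>) {1..<Suc n}"
  proof (rule inj_onI)
    fix a c
    assume "a \<in> {1..<Suc n}" "c \<in> {1..<Suc n}" "\<bar>\<sigma> (int a)\<bar> = \<bar>\<sigma> (int c)\<bar>"
    moreover from this have "\<sigma> (int a) = \<sigma> (int c) \<or> \<sigma> (int a) = \<sigma> (- int c)"
      using odd by (auto simp: abs_eq_iff)
    ultimately show "a = c"
      using injD[OF permutes_inj[OF perm]] by fastforce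
  qed
  then have "distinct (map abs (signed_perm_word n \<sigma>))"
    by (simp add: signed_perm_word_def distinct_map comp_def del: upt_Suc)
  with range show ?thesis
    by (simp add: signed_words_def)
qed

definition word_signed_perm :: "int list \<Rightarrow> int \<Rightarrow> int" where
  "word_signed_perm w k = (if 1 \<le> \<bar>k\<bar> \<and> \<bar>k\<bar> \<le> int (length w) then sgn k * w ! (nat \<bar>k\<bar> - 1) else k)"

lemma signed_perm_word_word_signed_perm: "length w = n \<Longrightarrow> signed_perm_word n (word_signed_perm w) = w"
  by (rule nth_equalityI) (simp_all add: nth_signed_perm_word word_signed_perm_def nat_add_distrib)

lemma word_signed_perm_signed_perm_word:
  assumes "\<sigma> \<in> signed_perms n"
  shows "word_signed_perm (signed_perm_word n \<sigma>) = \<sigma>"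
proof
  fix k
  show "word_signed_perm (signed_perm_word n \<sigma>) k = \<sigma> k"
  proof (cases "1 \<le> \<bar>k\<bar> \<and> \<bar>k\<bar> \<le> int n")
    case True
    define p where "p = nat \<bar>k\<bar> - 1"
    have "\<bar>k\<bar> = int (Suc p)" "p < n"
      using True by (auto simp: p_def)
    then have "signed_perm_word n \<sigma> ! (nat \<bar>k\<bar> - 1) = \<sigma> \<bar>k\<bar>"
      by (simp add: nth_signed_perm_word)
    moreover have "sgn k * \<sigma> \<bar>k\<bar> = \<sigma> k"
      using True signed_permsD(2)[OF assms, of k] by (cases "k < 0") auto
    ultimately show ?thesis
      using True by (simp add: word_signed_perm_def)
  next
    case False
    then have "k \<notin> signed_range n"
      by auto
    then show ?thesis
      unfolding word_signed_perm_def length_signed_perm_word if_not_P[OF False]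
      using permutes_not_in[OF signed_permsD(1)[OF assms]] by simp
  qed
qed

lemma inj_on_word_signed_perm:
  assumes w: "w \<in> signed_words n"
  shows "inj_on (word_signed_perm w) (signed_range n)"
proof (rule inj_onI)
  fix a c
  assume "a \<in> signed_range n" "c \<in> signed_range n" and eq: "word_signed_perm w a = word_signed_perm w c"
  define i j where "i = nat \<bar>a\<bar> - 1" and "j = nat \<bar>c\<bar> - 1"
  have a: "\<bar>a\<bar> = int (Suc i)" "i < n" and c: "\<bar>c\<bar> = int (Suc j)" "j < n"
    using \<open>a \<in> signed_range n\<close> \<open>c \<in> signed_range n\<close> by (auto simp: i_def j_def)
  have "length w = n" "distinct (map abs w)" "\<forall>z\<in>set w. 1 \<le> \<bar>z\<bar>"
    using w by (auto simp: signed_words_def)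
  then have nonzero: "w ! i \<noteq> 0"
    using a(2) nth_mem by fastforce
  from eq have sgn_eq: "sgn a * w ! i = sgn c * w ! j"
    using a c by (simp add: word_signed_perm_def \<open>length w = n\<close> nat_add_distrib)
  have "a \<noteq> 0" "c \<noteq> 0"
    using a c by auto
  then have "\<bar>w ! i\<bar> = \<bar>w ! j\<bar>"
    using arg_cong[OF sgn_eq, of abs] by (simp add: abs_mult)
  then have "i = j"
    using nth_eq_iff_index_eq[OF \<open>distinct (map abs w)\<close>, of i j] a c \<open>length w = n\<close> by simp
  with sgn_eq nonzero have "sgn a = sgn c"
    by simp
  moreover have "\<bar>a\<bar> = \<bar>c\<bar>"
    using a(1) c(1) \<open>i = j\<close> by simp
  ultimately show "a = c"
    by (metis mult_sgn_abs)
qed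

lemma word_signed_perm_in_signed_range:
  assumes w: "w \<in> signed_words n" and k: "k \<in> signed_range n"
  shows "word_signed_perm w k \<in> signed_range n"
proof -
  have "length w = n" and range: "\<forall>z\<in>set w. 1 \<le> \<bar>z\<bar> \<and> \<bar>z\<bar> \<le> int n"
    using w by (auto simp: signed_words_def)
  have "nat \<bar>k\<bar> - 1 < n"
    using k by auto
  then have "w ! (nat \<bar>k\<bar> - 1) \<in> set w"
    using \<open>length w = n\<close> by simp
  then have "1 \<le> \<bar>w ! (nat \<bar>k\<bar> - 1)\<bar> \<and> \<bar>w ! (nat \<bar>k\<bar> - 1)\<bar> \<le> int n"
    using range by blast
  moreover have "\<bar>sgn k\<bar> = 1"
    using k by (auto simp: abs_sgn_eq_1)
  ultimately have "1 \<le> \<bar>word_signed_perm w k\<bar> \<and> \<bar>word_signed_perm w k\<bar> \<le> int n"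
    using k \<open>length w = n\<close> by (auto simp: word_signed_perm_def abs_mult)
  then show ?thesis
    by auto
qed

lemma word_signed_perm_in_signed_perms:
  assumes w: "w \<in> signed_words n"
  shows "word_signed_perm w \<in> signed_perms n"
proof -
  have "word_signed_perm w ` signed_range n \<subseteq> signed_range n"
    using word_signed_perm_in_signed_range[OF w] by (rule image_subsetI)
  then have "word_signed_perm w ` signed_range n = signed_range n"
    by (rule endo_inj_surj[rotated, OF _ inj_on_word_signed_perm[OF w]]) simp
  then have "bij_betw (word_signed_perm w) (signed_range n) (signed_range n)"
    using inj_on_word_signed_perm[OF w] by (simp add: bij_betw_def)
  moreover have "word_signed_perm w k = k" if "k \<notin> signed_range n" for k
    using that w by (auto simp: word_signed_perm_def signed_words_def)
  ultimately have "word_signed_perm w permutes signed_range n"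
    by (rule bij_imp_permutes)
  moreover have "word_signed_perm w (- k) = - word_signed_perm w k" for k
    by (simp add: word_signed_perm_def)
  ultimately show ?thesis
    by (simp add: signed_perms_def)
qed

lemma bij_betw_signed_perm_word: "bij_betw (signed_perm_word n) (signed_perms n) (signed_words n)"
proof (rule bij_betw_byWitness[where f' = word_signed_perm])
  show "\<forall>w\<in>signed_words n. signed_perm_word n (word_signed_perm w) = w"
    by (simp add: signed_perm_word_word_signed_perm signed_words_def)
qed (auto simp: word_signed_perm_signed_perm_word signed_perm_word_in_signed_words
    word_signed_perm_in_signed_perms)

section \<open>The recurrence for the type B Eulerian polynomials\<close>

lemma eulerB_eq_sum_signed_words: "eulerB n = (\<Sum>w\<in>signed_words n. X ^ descents (0 # w))"
proof -
  have "eulerB n = (\<Sum>\<sigma>\<in>signed_perms n. X ^ descents (0 # signed_perm_word n \<sigma>))"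
    unfolding eulerB_def by (rule sum.cong) (simp_all add: desB_eq_descents monom_one_eq_X_power)
  also have "\<dots> = (\<Sum>w\<in>signed_words n. X ^ descents (0 # w))"
    by (rule sum.reindex_bij_betw[OF bij_betw_signed_perm_word])
  finally show ?thesis .
qed

lemma eulerB_0: "eulerB 0 = 1"
  by (simp add: eulerB_eq_sum_signed_words signed_words_0)

lemma eulerB_Suc: "eulerB (Suc m) = eulerB_step m (eulerB m)"
  by (simp add: eulerB_eq_sum_signed_words sum_signed_words_Suc)

lemma eulerB_eq_gamma_poly: "eulerB n = gamma_poly n"
proof (induction n)
  case 0
  show ?case
    by (simp add: eulerB_0 gamma_poly_def)
next
  case (Suc m)
  then show ?case
    by (simp add: eulerB_Suc gamma_poly_Suc)
qed

lemma gammaB_eq_gammaB_rec: "gammaB n = gammaB_rec n"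
  by (rule gammaB_eqI) (simp add: eulerB_eq_gamma_poly is_gamma_vector_gamma_poly)

theorem lemma2p4:
  fixes n i :: nat
  assumes "n \<ge> 1" and "1 \<le> i" and "i \<le> n div 2"
  shows "int (i + 1) * gammaB (n - 1) i \<le> gammaB n i"
proof -
  obtain m where n: "n = Suc m"
    using assms(1) by (cases n) auto
  have "int (i + 1) * gammaB_rec m i \<le> int (2 * i + 1) * gammaB_rec m i"
    using gammaB_rec_nonneg[of m i] by (intro mult_right_mono) auto
  also have "\<dots> \<le> gammaB_rec (Suc m) i"
    by (rule gammaB_rec_Suc_ge)
  finally show ?thesis
    by (simp add: n gammaB_eq_gammaB_rec)
qed

end
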